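(* Let $S$ be a partial semigroup. (i) If $I$ is a two-sided ideal in $S$ such that $S$ is $I$-directed, then $\{\mathcal{U}\in\gamma S: I\in\mathcal{U}\}$ is a compact two-sided ideal in $\gamma S$. (ii) If $E$ is a right ideal in $S$ such that $S$ is $E$-directed, then $\{\mathcal{U}\in\gamma S: E\in\mathcal{U}\}$ is a compact right ideal in $\gamma S$.
   Context: Partial semigroup: partial operation with $(rs)t$ defined iff $r(st)$ defined, then equal. For $A\subseteq S$, $S$ is $A$-directed if for all $x_1,\dots,x_n\in S$ there is $x\in A$ with all $x_ix$ defined. A two-sided ideal in $S$ is a non-empty $I\subseteq S$ with $xy\in I$ whenever $xy$ is defined and $x\in I$ or $y\in I$; a right ideal is a non-empty $E\subseteq S$ with $xy\in E$ whenever $xy$ is defined and $x\in E$. $\gamma S$ is the set of ultrafilters $\mathcal{U}$ on $S$ with $\{t:st\text{ defined}\}\in\mathcal{U}$ for each $s\in S$, with the Stone (Čech–Stone) topology and the semigroup operation $A\in\mathcal{U}*\mathcal{V}$ iff $\{s:\{t: st\text{ defined and } st\in A\}\in\mathcal{V}\}\in\mathcal{U}$. *)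

theory Defs
  imports "HOL-Analysis.Analysis"
begin

text \<open>A partial operation on the type 'a (the whole type is the carrier S);
  None means "undefined".\<close>

definition partial_semigroup :: "('a \<Rightarrow> 'a \<Rightarrow> 'a option) \<Rightarrow> bool" where
  "partial_semigroup op \<longleftrightarrow>
     (\<forall>r s t. Option.bind (op r s) (\<lambda>x. op x t) = Option.bind (op s t) (\<lambda>y. op r y))"

definition directed_in :: "('a \<Rightarrow> 'a \<Rightarrow> 'a option) \<Rightarrow> 'a set \<Rightarrow> bool" where
  "directed_in op A \<longleftrightarrow> (\<forall>F. finite F \<longrightarrow> (\<exists>x\<in>A. \<forall>y\<in>F. op y x \<noteq> None))"

definition ps_two_sided_ideal :: "('a \<Rightarrow> 'a \<Rightarrow> 'a option) \<Rightarrow> 'a set \<Rightarrow> bool" where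
  "ps_two_sided_ideal op I \<longleftrightarrow> I \<noteq> {} \<and>
     (\<forall>x y z. op x y = Some z \<longrightarrow> (x \<in> I \<or> y \<in> I) \<longrightarrow> z \<in> I)"

definition ps_right_ideal :: "('a \<Rightarrow> 'a \<Rightarrow> 'a option) \<Rightarrow> 'a set \<Rightarrow> bool" where
  "ps_right_ideal op E \<longleftrightarrow> E \<noteq> {} \<and>
     (\<forall>x y z. op x y = Some z \<longrightarrow> x \<in> E \<longrightarrow> z \<in> E)"

definition ultrafilter_on :: "'a set set \<Rightarrow> bool" where
  "ultrafilter_on U \<longleftrightarrow> UNIV \<in> U \<and> {} \<notin> U \<and>
     (\<forall>A B. A \<in> U \<longrightarrow> B \<in> U \<longrightarrow> A \<inter> B \<in> U) \<and>
     (\<forall>A B. A \<in> U \<longrightarrow> A \<subseteq> B \<longrightarrow> B \<in> U) \<and>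
     (\<forall>A. A \<in> U \<or> - A \<in> U)"

definition gammaS :: "('a \<Rightarrow> 'a \<Rightarrow> 'a option) \<Rightarrow> 'a set set set" where
  "gammaS op = {U. ultrafilter_on U \<and> (\<forall>s. {t. op s t \<noteq> None} \<in> U)}"

definition ustar :: "('a \<Rightarrow> 'a \<Rightarrow> 'a option) \<Rightarrow> 'a set set \<Rightarrow> 'a set set \<Rightarrow> 'a set set" where
  "ustar op U V = {A. {s. {t. \<exists>x. op s t = Some x \<and> x \<in> A} \<in> V} \<in> U}"

definition gammaS_topology :: "('a \<Rightarrow> 'a \<Rightarrow> 'a option) \<Rightarrow> 'a set set topology" where
  "gammaS_topology op = topology_generated_by {{U \<in> gammaS op. A \<in> U} | A. True}"

definition gamma_two_sided_ideal :: "('a \<Rightarrow> 'a \<Rightarrow> 'a option) \<Rightarrow> 'a set set set \<Rightarrow> bool" where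
  "gamma_two_sided_ideal op L \<longleftrightarrow> L \<noteq> {} \<and> L \<subseteq> gammaS op \<and>
     (\<forall>U\<in>gammaS op. \<forall>V\<in>L. ustar op U V \<in> L \<and> ustar op V U \<in> L)"

definition gamma_right_ideal :: "('a \<Rightarrow> 'a \<Rightarrow> 'a option) \<Rightarrow> 'a set set set \<Rightarrow> bool" where
  "gamma_right_ideal op L \<longleftrightarrow> L \<noteq> {} \<and> L \<subseteq> gammaS op \<and>
     (\<forall>V\<in>L. \<forall>U\<in>gammaS op. ustar op V U \<in> L)"

end

theory Submission
  imports Defs
begin

text \<open>The sets \<open>{U \<in> gammaS op. A \<in> U}\<close> are clopen, and \<open>\<gamma>S\<close> is compact by the usual
  ultrafilter argument: an open cover without finite subcover yields, together with the domains
  \<open>{t. st defined}\<close>, a family with the finite intersection property whose ultrafilter extension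
  lies in no member of the cover. So the set of ultrafilters containing \<open>I\<close> is compact, and it is
  non-empty because \<open>I\<close>-directedness gives \<open>I\<close> together with the domains the finite intersection
  property. Writing \<open>s\<^sup>-\<^sup>1A = {t. st \<in> A}\<close>, the set \<open>s\<^sup>-\<^sup>1E\<close> contains the domain of \<open>s\<close> when
  \<open>s \<in> E\<close> and \<open>E\<close> is a right ideal, and \<open>s\<^sup>-\<^sup>1I\<close> contains the domain of \<open>s\<close> intersected with \<open>I\<close>
  when \<open>I\<close> is a two-sided ideal; this gives the ideal properties in \<open>\<gamma>S\<close>.\<close>

definition finite_intersection_property :: "'a set set \<Rightarrow> bool" where
  "finite_intersection_property G \<longleftrightarrow> (\<forall>H. finite H \<and> H \<subseteq> G \<longrightarrow> \<Inter>H \<noteq> {})"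

lemma ultrafilter_on_UNIV: "ultrafilter_on U \<Longrightarrow> UNIV \<in> U"
  by (simp add: ultrafilter_on_def)

lemma ultrafilter_on_empty: "ultrafilter_on U \<Longrightarrow> {} \<notin> U"
  by (simp add: ultrafilter_on_def)

lemma ultrafilter_on_mono: "ultrafilter_on U \<Longrightarrow> A \<in> U \<Longrightarrow> A \<subseteq> B \<Longrightarrow> B \<in> U"
  unfolding ultrafilter_on_def by blast

lemma ultrafilter_on_Int_iff: "ultrafilter_on U \<Longrightarrow> A \<inter> B \<in> U \<longleftrightarrow> A \<in> U \<and> B \<in> U"
  by (metis ultrafilter_on_def ultrafilter_on_mono inf_le1 inf_le2)

lemma ultrafilter_on_Compl_iff: "ultrafilter_on U \<Longrightarrow> - A \<in> U \<longleftrightarrow> A \<notin> U"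
  by (metis ultrafilter_on_def Compl_disjoint)

lemma ultrafilter_on_Inter:
  assumes "ultrafilter_on U" "finite H" "H \<subseteq> U"
  shows "\<Inter>H \<in> U"
  using assms(2,3)
  by (induction H rule: finite_induct) (auto simp: ultrafilter_on_UNIV ultrafilter_on_Int_iff assms(1))

lemma ultrafilter_on_preimage:
  assumes U: "ultrafilter_on U" and UNIV: "h UNIV = UNIV"
    and Int: "\<And>A B. h (A \<inter> B) = h A \<inter> h B" and Compl: "\<And>A. h (- A) = - h A"
  shows "ultrafilter_on {A. h A \<in> U}"
proof -
  have "h {} = {}"
    using Compl[of UNIV] UNIV by simp
  moreover have "h A \<subseteq> h B" if "A \<subseteq> B" for A B
  proof -
    have "h A = h A \<inter> h B"
      using Int[of A B] that by (simp add: inf.absorb1)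
    then show ?thesis by blast
  qed
  ultimately show ?thesis
    using U unfolding ultrafilter_on_def by (simp add: UNIV Int Compl)
qed

lemma finite_intersection_property_insert:
  assumes fip: "finite_intersection_property M" and H: "finite H" "H \<subseteq> M" "\<Inter>H \<subseteq> B"
  shows "finite_intersection_property (insert B M)"
  unfolding finite_intersection_property_def
proof (intro allI impI)
  fix K assume K: "finite K \<and> K \<subseteq> insert B M"
  have "finite (H \<union> (K - {B}))" "H \<union> (K - {B}) \<subseteq> M"
    using H K by auto
  then have "\<Inter>(H \<union> (K - {B})) \<noteq> {}"
    using fip by (simp add: finite_intersection_property_def)
  moreover have "\<Inter>(H \<union> (K - {B})) \<subseteq> \<Inter>K"
    using H(3) by (auto simp: Inter_Un_distrib)
  ultimately show "\<Inter>K \<noteq> {}" by blast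
qed

lemma maximal_finite_intersection_property:
  assumes "finite_intersection_property G"
  obtains M where "G \<subseteq> M" "finite_intersection_property M"
    "\<And>B. finite_intersection_property (insert B M) \<Longrightarrow> B \<in> M"
proof -
  define \<A> where "\<A> = {F. G \<subseteq> F \<and> finite_intersection_property F}"
  have "\<Union>\<C> \<in> \<A>" if ne: "\<C> \<noteq> {}" and chain: "subset.chain \<A> \<C>" for \<C>
  proof -
    have "finite_intersection_property (\<Union>\<C>)"
      unfolding finite_intersection_property_def
    proof (intro allI impI)
      fix H assume H: "finite H \<and> H \<subseteq> \<Union>\<C>"
      then obtain F where "F \<in> \<C>" "H \<subseteq> F"
        using finite_subset_Union_chain[of H \<C> \<A>] H ne chain by blast
      then show "\<Inter>H \<noteq> {}"
        using H chain
        unfolding \<A>_def subset_chain_def finite_intersection_property_def by blast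
    qed
    then show ?thesis
      using ne chain unfolding \<A>_def subset_chain_def by blast
  qed
  moreover have "G \<in> \<A>"
    using assms by (simp add: \<A>_def)
  ultimately obtain M where "M \<in> \<A>" "\<And>X. X \<in> \<A> \<Longrightarrow> M \<subseteq> X \<Longrightarrow> X = M"
    using subset_Zorn_nonempty[of \<A>] by blast
  then show thesis
    using that[of M] unfolding \<A>_def by blast
qed

theorem ultrafilter_extension:
  assumes "finite_intersection_property G"
  obtains W where "ultrafilter_on W" "G \<subseteq> W"
proof -
  obtain M where GM: "G \<subseteq> M" and fip: "finite_intersection_property M"
    and max: "\<And>B. finite_intersection_property (insert B M) \<Longrightarrow> B \<in> M"
    using maximal_finite_intersection_property[OF assms] by blast
  have closed: "B \<in> M" if "finite H" "H \<subseteq> M" "\<Inter>H \<subseteq> B" for H B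
    using max finite_intersection_property_insert[OF fip that] by blast
  have "X \<in> M \<or> - X \<in> M" for X
  proof (cases "finite_intersection_property (insert X M)")
    case False
    then obtain K where K: "finite K" "K \<subseteq> insert X M" "\<Inter>K = {}"
      unfolding finite_intersection_property_def by blast
    then have "\<Inter>(K - {X}) \<subseteq> - X" by blast
    then show ?thesis
      using closed[of "K - {X}"] K by blast
  qed (use max in blast)
  moreover have "{} \<notin> M"
    using fip[unfolded finite_intersection_property_def, rule_format, of "{{}}"] by auto
  moreover have "UNIV \<in> M"
    using closed[of "{}"] by simp
  moreover have "X \<inter> Y \<in> M" if "X \<in> M" "Y \<in> M" for X Y
    using closed[of "{X, Y}"] that by simp
  moreover have "Y \<in> M" if "X \<in> M" "X \<subseteq> Y" for X Y
    using closed[of "{X}"] that by simp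
  ultimately have "ultrafilter_on M"
    unfolding ultrafilter_on_def by blast
  with GM show thesis
    using that by blast
qed

lemma topspace_gammaS_topology [simp]: "topspace (gammaS_topology op) = gammaS op"
proof -
  have "gammaS op = {U \<in> gammaS op. UNIV \<in> U}"
    by (auto simp: gammaS_def ultrafilter_on_UNIV)
  then show ?thesis
    unfolding gammaS_topology_def topology_generated_by_topspace by blast
qed

lemma openin_gammaS_topology_basic: "openin (gammaS_topology op) {U \<in> gammaS op. A \<in> U}"
  unfolding gammaS_topology_def by (rule topology_generated_by_Basis) blast

lemma closedin_gammaS_topology_basic: "closedin (gammaS_topology op) {U \<in> gammaS op. A \<in> U}"
proof -
  have "gammaS op - {U \<in> gammaS op. A \<in> U} = {U \<in> gammaS op. - A \<in> U}"
    by (auto simp: gammaS_def ultrafilter_on_Compl_iff)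
  then show ?thesis
    unfolding closedin_def by (simp add: openin_gammaS_topology_basic)
qed

lemma openin_gammaS_topology_imp_basic:
  assumes "openin (gammaS_topology op) T" "U \<in> T"
  obtains A where "A \<in> U" "{V \<in> gammaS op. A \<in> V} \<subseteq> T"
proof -
  have "U \<in> gammaS op"
    using assms openin_subset by fastforce
  have "generate_topology_on {{U \<in> gammaS op. A \<in> U} | A. True} T"
    using assms(1) by (simp add: gammaS_topology_def openin_topology_generated_by_iff)
  then have "\<exists>A\<in>U. {V \<in> gammaS op. A \<in> V} \<subseteq> T"
    using \<open>U \<in> gammaS op\<close> \<open>U \<in> T\<close>
  proof (induction arbitrary: U rule: generate_topology_on.induct)
    case (Int T1 T2)
    then obtain A1 A2 where "A1 \<in> U" "{V \<in> gammaS op. A1 \<in> V} \<subseteq> T1"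
      and "A2 \<in> U" "{V \<in> gammaS op. A2 \<in> V} \<subseteq> T2"
      by blast
    moreover have "ultrafilter_on V" if "V \<in> gammaS op" for V
      using that by (simp add: gammaS_def)
    ultimately show ?case
      using \<open>U \<in> gammaS op\<close> by (intro bexI[of _ "A1 \<inter> A2"]) (auto simp: ultrafilter_on_Int_iff)
  next
    case (UN \<K>)
    then obtain K where "K \<in> \<K>" "U \<in> K"
      by blast
    with UN.IH show ?case
      using UN.prems(1) by blast
  next
    case (Basis B)
    then show ?case
      by blast
  qed simp
  then show thesis
    using that by blast
qed

lemma finite_intersection_property_if_ultrafilters:
  assumes "\<And>H. finite H \<Longrightarrow> H \<subseteq> G \<Longrightarrow> \<exists>U. ultrafilter_on U \<and> H \<subseteq> U"
  shows "finite_intersection_property G"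
  unfolding finite_intersection_property_def
proof (intro allI impI)
  fix H assume "finite H \<and> H \<subseteq> G"
  then obtain U where "ultrafilter_on U" "H \<subseteq> U" "finite H"
    using assms by blast
  then show "\<Inter>H \<noteq> {}"
    using ultrafilter_on_Inter ultrafilter_on_empty by fastforce
qed

lemma finite_intersection_property_uncovered:
  assumes no_subcover: "\<And>\<F>. finite \<F> \<Longrightarrow> \<F> \<subseteq> \<U> \<Longrightarrow> \<not> gammaS op \<subseteq> \<Union>\<F>"
  shows "finite_intersection_property
           (range (\<lambda>s. {t. op s t \<noteq> None}) \<union> uminus ` {A. \<exists>T\<in>\<U>. {V \<in> gammaS op. A \<in> V} \<subseteq> T})"
    (is "finite_intersection_property (?D \<union> uminus ` ?\<A>)")
proof (rule finite_intersection_property_if_ultrafilters)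
  fix H assume H: "finite H" "H \<subseteq> ?D \<union> uminus ` ?\<A>"
  have "finite (H \<inter> uminus ` ?\<A>)"
    using H(1) by simp
  then obtain \<A>\<^sub>0 where \<A>\<^sub>0: "\<A>\<^sub>0 \<subseteq> ?\<A>" "finite \<A>\<^sub>0" "H \<inter> uminus ` ?\<A> = uminus ` \<A>\<^sub>0"
    using finite_subset_image[of "H \<inter> uminus ` ?\<A>" uminus ?\<A>] by auto
  then have "\<forall>A\<in>\<A>\<^sub>0. \<exists>T. T \<in> \<U> \<and> {V \<in> gammaS op. A \<in> V} \<subseteq> T"
    by blast
  then obtain g where g: "\<forall>A\<in>\<A>\<^sub>0. g A \<in> \<U> \<and> {V \<in> gammaS op. A \<in> V} \<subseteq> g A"
    by (rule bchoice[THEN exE])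
  have "g ` \<A>\<^sub>0 \<subseteq> \<U>"
    using g by blast
  then obtain U where U: "U \<in> gammaS op" "U \<notin> \<Union>(g ` \<A>\<^sub>0)"
    using no_subcover[of "g ` \<A>\<^sub>0"] \<A>\<^sub>0(2) by blast
  then have uf: "ultrafilter_on U"
    by (simp add: gammaS_def)
  have "A \<notin> U" if "A \<in> \<A>\<^sub>0" for A
    using U g that by blast
  then have "uminus ` \<A>\<^sub>0 \<subseteq> U"
    using uf by (auto simp: ultrafilter_on_Compl_iff)
  moreover have "?D \<subseteq> U"
    using U(1) by (auto simp: gammaS_def)
  moreover have "H \<subseteq> ?D \<union> uminus ` \<A>\<^sub>0"
    using H(2) unfolding \<A>\<^sub>0(3)[symmetric] by (simp add: subset_iff)
  ultimately have "H \<subseteq> U"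
    by (meson Un_least subset_trans)
  with uf show "\<exists>U. ultrafilter_on U \<and> H \<subseteq> U"
    by blast
qed

theorem compact_space_gammaS_topology: "compact_space (gammaS_topology op)"
  unfolding compact_space_alt topspace_gammaS_topology
proof (intro allI impI)
  fix \<U> assume \<U>: "(\<forall>T\<in>\<U>. openin (gammaS_topology op) T) \<and> gammaS op \<subseteq> \<Union>\<U>"
  show "\<exists>\<F>. finite \<F> \<and> \<F> \<subseteq> \<U> \<and> gammaS op \<subseteq> \<Union>\<F>"
  proof (rule ccontr)
    let ?\<A> = "{A. \<exists>T\<in>\<U>. {V \<in> gammaS op. A \<in> V} \<subseteq> T}"
    assume "\<nexists>\<F>. finite \<F> \<and> \<F> \<subseteq> \<U> \<and> gammaS op \<subseteq> \<Union>\<F>"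
    then have "finite_intersection_property (range (\<lambda>s. {t. op s t \<noteq> None}) \<union> uminus ` ?\<A>)"
      by (intro finite_intersection_property_uncovered) blast
    then obtain W where W: "ultrafilter_on W"
      and "range (\<lambda>s. {t. op s t \<noteq> None}) \<union> uminus ` ?\<A> \<subseteq> W"
      by (rule ultrafilter_extension)
    then have dom: "range (\<lambda>s. {t. op s t \<noteq> None}) \<subseteq> W" and compl: "uminus ` ?\<A> \<subseteq> W"
      by simp_all
    with W have "W \<in> gammaS op"
      by (auto simp: gammaS_def)
    then obtain T where T: "T \<in> \<U>" "W \<in> T"
      using \<U> by blast
    then obtain A where A: "A \<in> W" "{V \<in> gammaS op. A \<in> V} \<subseteq> T"
      using openin_gammaS_topology_imp_basic[of op T W] \<U> by blast
    then have "- A \<in> W"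
      using compl T(1) by blast
    with A(1) show False
      using W by (simp add: ultrafilter_on_Compl_iff)
  qed
qed

lemma compactin_gammaS_topology_basic:
  "compactin (gammaS_topology op) {U \<in> gammaS op. A \<in> U}"
  by (rule closedin_compact_space[OF compact_space_gammaS_topology closedin_gammaS_topology_basic])

lemma gammaS_basic_nonempty:
  assumes "directed_in op A"
  shows "{U \<in> gammaS op. A \<in> U} \<noteq> {}"
proof -
  let ?D = "\<lambda>s. {t. op s t \<noteq> None}"
  have "finite_intersection_property (insert A (range ?D))"
    unfolding finite_intersection_property_def
  proof (intro allI impI)
    fix H assume H: "finite H \<and> H \<subseteq> insert A (range ?D)"
    then have "finite (H - {A})" "H - {A} \<subseteq> ?D ` UNIV"
      by (simp_all add: Diff_subset_conv)
    then obtain F where F: "finite F" "H - {A} = ?D ` F"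
      using finite_subset_image[of "H - {A}" ?D UNIV] by auto
    obtain x where x: "x \<in> A" "\<forall>y\<in>F. op y x \<noteq> None"
      using assms F(1) unfolding directed_in_def by blast
    have "H \<subseteq> insert A (H - {A})"
      by blast
    then have "H \<subseteq> insert A (?D ` F)"
      unfolding F(2) .
    moreover have "x \<in> \<Inter>(insert A (?D ` F))"
      using x by simp
    ultimately show "\<Inter>H \<noteq> {}"
      using Inter_anti_mono by blast
  qed
  then obtain W where "ultrafilter_on W" "insert A (range ?D) \<subseteq> W"
    by (rule ultrafilter_extension)
  then show ?thesis
    by (auto simp: gammaS_def)
qed

definition left_preimage :: "('a \<Rightarrow> 'a \<Rightarrow> 'a option) \<Rightarrow> 'a \<Rightarrow> 'a set \<Rightarrow> 'a set" where
  "left_preimage op s A = {t. \<exists>x. op s t = Some x \<and> x \<in> A}"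

lemma ustar_iff: "A \<in> ustar op U V \<longleftrightarrow> {s. left_preimage op s A \<in> V} \<in> U"
  by (simp add: ustar_def left_preimage_def)

lemma left_preimage_UNIV: "left_preimage op s UNIV = {t. op s t \<noteq> None}"
  by (auto simp: left_preimage_def)

lemma left_preimage_Int: "left_preimage op s (A \<inter> B) = left_preimage op s A \<inter> left_preimage op s B"
  by (auto simp: left_preimage_def)

lemma left_preimage_Compl: "left_preimage op s (- A) = {t. op s t \<noteq> None} \<inter> - left_preimage op s A"
  by (auto simp: left_preimage_def)

lemma partial_semigroup_assoc:
  assumes "partial_semigroup op" "op r s = Some y" "op s t = Some x"
  shows "op y t = op r x"
  using assms unfolding partial_semigroup_def by (metis bind.simps(2))

lemma ultrafilter_on_ustar:
  assumes U: "ultrafilter_on U" and V: "V \<in> gammaS op"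
  shows "ultrafilter_on (ustar op U V)"
proof -
  have uf: "ultrafilter_on V" and dom: "\<And>s. {t. op s t \<noteq> None} \<in> V"
    using V by (simp_all add: gammaS_def)
  have "ustar op U V = {A. {s. left_preimage op s A \<in> V} \<in> U}"
    by (simp add: set_eq_iff ustar_iff)
  also have "ultrafilter_on \<dots>"
  proof (rule ultrafilter_on_preimage[OF U])
    show "{s. left_preimage op s UNIV \<in> V} = UNIV"
      using dom by (simp add: left_preimage_UNIV del: not_None_eq)
    show "{s. left_preimage op s (A \<inter> B) \<in> V} = {s. left_preimage op s A \<in> V} \<inter> {s. left_preimage op s B \<in> V}" for A B
      using uf by (auto simp: left_preimage_Int ultrafilter_on_Int_iff)
    show "{s. left_preimage op s (- A) \<in> V} = - {s. left_preimage op s A \<in> V}" for A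
      using uf dom by (auto simp: left_preimage_Compl ultrafilter_on_Int_iff ultrafilter_on_Compl_iff)
  qed
  finally show ?thesis .
qed

lemma domain_in_ustar:
  assumes "partial_semigroup op" "U \<in> gammaS op" "V \<in> gammaS op"
  shows "{t. op s t \<noteq> None} \<in> ustar op U V"
proof -
  have ufU: "ultrafilter_on U" and ufV: "ultrafilter_on V"
    and domU: "\<And>s. {t. op s t \<noteq> None} \<in> U" and domV: "\<And>s. {t. op s t \<noteq> None} \<in> V"
    using assms(2,3) by (simp_all add: gammaS_def)
  have "left_preimage op s' {t. op s t \<noteq> None} \<in> V" if "op s s' = Some y" for s' y
  proof -
    \<comment> \<open>if \<open>s't\<close> and \<open>(ss')t\<close> are defined, then so is \<open>s(s't)\<close>\<close>
    have "{t. op y t \<noteq> None} \<inter> {t. op s' t \<noteq> None} \<subseteq> left_preimage op s' {t. op s t \<noteq> None}"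
      using partial_semigroup_assoc[OF assms(1) that] by (auto simp: left_preimage_def)
    moreover have "{t. op y t \<noteq> None} \<inter> {t. op s' t \<noteq> None} \<in> V"
      using ufV domV by (simp add: ultrafilter_on_Int_iff)
    ultimately show ?thesis
      using ufV ultrafilter_on_mono by blast
  qed
  then have "{s'. op s s' \<noteq> None} \<subseteq> {s'. left_preimage op s' {t. op s t \<noteq> None} \<in> V}"
    by blast
  then show ?thesis
    unfolding ustar_iff using ufU domU ultrafilter_on_mono by blast
qed

theorem ustar_in_gammaS:
  assumes "partial_semigroup op" "U \<in> gammaS op" "V \<in> gammaS op"
  shows "ustar op U V \<in> gammaS op"
proof -
  have "ultrafilter_on U"
    using assms(2) by (simp add: gammaS_def)
  then show ?thesis
    using ultrafilter_on_ustar[OF _ assms(3)] domain_in_ustar[OF assms]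
    unfolding gammaS_def by blast
qed

lemma right_ideal_in_ustar:
  assumes "ps_right_ideal op E" "V \<in> gammaS op" "E \<in> V" "U \<in> gammaS op"
  shows "E \<in> ustar op V U"
proof -
  have ufU: "ultrafilter_on U" and domU: "\<And>s. {t. op s t \<noteq> None} \<in> U"
    using assms(4) by (simp_all add: gammaS_def)
  have "{t. op s t \<noteq> None} \<subseteq> left_preimage op s E" if "s \<in> E" for s
    using assms(1) that by (auto simp: ps_right_ideal_def left_preimage_def)
  then have "E \<subseteq> {s. left_preimage op s E \<in> U}"
    using ufU domU ultrafilter_on_mono by blast
  then show ?thesis
    unfolding ustar_iff using assms(2,3) ultrafilter_on_mono by (fastforce simp: gammaS_def)
qed

lemma two_sided_ideal_in_ustar:
  assumes "ps_two_sided_ideal op I" "V \<in> gammaS op" "I \<in> V" "U \<in> gammaS op"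
  shows "I \<in> ustar op U V"
proof -
  have ufV: "ultrafilter_on V"
    using assms(2) by (simp add: gammaS_def)
  have "{t. op s t \<noteq> None} \<inter> I \<subseteq> left_preimage op s I" for s
    using assms(1) by (auto simp: ps_two_sided_ideal_def left_preimage_def)
  moreover have "{t. op s t \<noteq> None} \<inter> I \<in> V" for s
    using ufV assms(2,3) by (simp add: ultrafilter_on_Int_iff gammaS_def)
  ultimately have "{s. left_preimage op s I \<in> V} = UNIV"
    using ufV ultrafilter_on_mono by blast
  then show ?thesis
    unfolding ustar_iff using assms(4) by (simp add: gammaS_def ultrafilter_on_UNIV)
qed

lemma ps_two_sided_ideal_imp_right_ideal: "ps_two_sided_ideal op I \<Longrightarrow> ps_right_ideal op I"
  by (simp add: ps_two_sided_ideal_def ps_right_ideal_def)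

lemma gamma_right_ideal_basic:
  assumes "partial_semigroup op" "ps_right_ideal op E" "directed_in op E"
  shows "gamma_right_ideal op {U \<in> gammaS op. E \<in> U}"
  using gammaS_basic_nonempty[OF assms(3)] ustar_in_gammaS[OF assms(1)] right_ideal_in_ustar[OF assms(2)]
  by (auto simp: gamma_right_ideal_def)

lemma gamma_two_sided_ideal_basic:
  assumes "partial_semigroup op" "ps_two_sided_ideal op I" "directed_in op I"
  shows "gamma_two_sided_ideal op {U \<in> gammaS op. I \<in> U}"
  using gammaS_basic_nonempty[OF assms(3)] ustar_in_gammaS[OF assms(1)]
    right_ideal_in_ustar[OF ps_two_sided_ideal_imp_right_ideal[OF assms(2)]]
    two_sided_ideal_in_ustar[OF assms(2)]
  by (auto simp: gamma_two_sided_ideal_def)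

theorem lemma4p2:
  fixes op :: "'a \<Rightarrow> 'a \<Rightarrow> 'a option"
  assumes "partial_semigroup op"
  shows "(\<forall>I. ps_two_sided_ideal op I \<and> directed_in op I \<longrightarrow>
            (let L = {U \<in> gammaS op. I \<in> U} in
               compactin (gammaS_topology op) L \<and> gamma_two_sided_ideal op L))
       \<and> (\<forall>E. ps_right_ideal op E \<and> directed_in op E \<longrightarrow>
            (let L = {U \<in> gammaS op. E \<in> U} in
               compactin (gammaS_topology op) L \<and> gamma_right_ideal op L))"
  unfolding Let_def
  using compactin_gammaS_topology_basic gamma_two_sided_ideal_basic[OF assms]
    gamma_right_ideal_basic[OF assms]
  by blast

end
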